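(* The formal power series $G(z)=\sum_{n\ge3}G_n(t)\frac{z^{n-1}}{(n-1)!}\in\mathbb Z[t][[z]]$ is the unique formal power series solution of \[ \frac{dG}{dz}=\frac{z+G}{1-tG} \] satisfying $G(0)=0$.
   Context: $P_n(t)$ ($n\ge3$) is defined by $P_3=1$ and $P_n(t)=P_{n-1}(t)(1+t)+t\sum_{i=3}^{n-2}\binom{n-2}{i-1}P_i(t)P_{n+1-i}(t)$ for $n>3$; it is symmetric with center $(n-3)/2$. For $f$ symmetric with center $d/2$, written uniquely as $f(t)=\sum_{i=0}^{\lfloor d/2\rfloor}\gamma_it^i(1+t)^{d-2i}$, $\gamma(f):=\sum_i\gamma_it^i$. $G_n:=\gamma(P_n)$. *)

theory Defs
  imports "HOL-Computational_Algebra.Computational_Algebra"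
begin

text \<open>The polynomials P_n(t) (meaningful for n >= 3; the values for n < 3 are
  an irrelevant convention, set to 0).\<close>
function P :: "nat \<Rightarrow> int poly" where
  "P n = (if n < 3 then 0 else if n = 3 then 1 else
      P (n - 1) * [:1, 1:] +
      [:0, 1:] * (\<Sum>i\<in>{3..n-2}. of_nat ((n - 2) choose (i - 1)) * P i * P (n + 1 - i)))"
  by auto
termination
  by (relation "measure id") auto

definition gamma :: "nat \<Rightarrow> int poly \<Rightarrow> int poly" where
  "gamma d f = (THE g. degree g \<le> d div 2 \<and>
      f = (\<Sum>i\<le>d div 2. smult (coeff g i) (monom 1 i * [:1, 1:] ^ (d - 2 * i))))"

definition Gpoly :: "nat \<Rightarrow> int poly" where
  "Gpoly n = gamma (n - 3) (P n)"

text \<open>G(z) = sum_{n>=3} G_n(t) z^(n-1)/(n-1)!, i.e. coefficient of z^m is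
  G_{m+1}(t)/m! for m >= 2, and 0 for m < 2.\<close>
definition Gfps :: "rat poly fps" where
  "Gfps = Abs_fps (\<lambda>m. if m \<ge> 2 then smult (1 / fact m) (map_poly of_int (Gpoly (m + 1))) else 0)"

end

theory Submission
  imports Defs
begin

text \<open>A polynomial f symmetric with centre d/2 satisfies
  f(t) = (1+t)^d * \<gamma>(f)(t/(1+t)^2), and t \<mapsto> t/(1+t)^2 is injective on (0,1), so \<gamma>(f) is
  determined by this identity. Substituting P_n(t) = (1+t)^(n-3) * \<Gamma>_n(t/(1+t)^2) into the
  recursion for P_n, the factors 1+t and t are absorbed by (1+t)^(n-3) and u = t/(1+t)^2, leaving
  \<Gamma>_n = \<Gamma>_(n-1) + u * \<Sum> binom(n-2, i-1) \<Gamma>_i \<Gamma>_(n+1-i) with \<Gamma>_3 = 1 (this is gamma_P);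
  hence G_n = \<Gamma>_n.
  Read off at z^m/m!, this recursion is the equation G' = z + G + t G' G, whose solution with
  G(0) = 0 is unique because coefficient m+1 is determined by the coefficients up to m.\<close>

abbreviation of_int_poly :: "int poly \<Rightarrow> 'a::comm_ring_1 poly" where
  "of_int_poly \<equiv> map_poly of_int"

lemma of_int_poly_add: "of_int_poly (p + q) = (of_int_poly p + of_int_poly q :: 'a::comm_ring_1 poly)"
  by (simp add: poly_eq_iff coeff_map_poly)

lemma of_int_poly_mult: "of_int_poly (p * q) = (of_int_poly p * of_int_poly q :: 'a::comm_ring_1 poly)"
  by (simp add: poly_eq_iff coeff_map_poly coeff_mult)

lemma of_int_poly_sum: "of_int_poly (sum f A) = (\<Sum>a\<in>A. of_int_poly (f a) :: 'a::comm_ring_1 poly)"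
  by (induction A rule: infinite_finite_induct) (auto simp: of_int_poly_add)

lemma of_int_poly_power: "of_int_poly (p ^ n) = (of_int_poly p ^ n :: 'a::comm_ring_1 poly)"
  by (induction n) (auto simp: of_int_poly_mult)

lemma of_int_poly_of_nat: "of_int_poly (of_nat n) = (of_nat n :: 'a::comm_ring_1 poly)"
  by (simp add: of_nat_poly map_poly_pCons)

lemmas of_int_poly_simps = of_int_poly_add of_int_poly_mult of_int_poly_sum of_int_poly_power
  of_int_poly_of_nat map_poly_pCons map_poly_smult map_poly_monom

lemma of_int_poly_inject: "(of_int_poly p :: 'a::{comm_ring_1, ring_char_0} poly) = of_int_poly q \<longleftrightarrow> p = q"
  by (simp add: poly_eq_iff coeff_map_poly)

lemma int_poly_eqI:
  assumes "infinite S" and "\<And>x::'a::{idom, ring_char_0}. x \<in> S \<Longrightarrow>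
    poly (of_int_poly p) x = poly (of_int_poly q) x"
  shows "p = q"
proof -
  have "S \<subseteq> {x. poly (of_int_poly p - of_int_poly q :: 'a poly) x = 0}"
    using assms(2) by auto
  then have "of_int_poly p - of_int_poly q = (0 :: 'a poly)"
    using assms(1) finite_subset poly_roots_finite by blast
  then show ?thesis
    by (simp add: of_int_poly_inject)
qed

section \<open>The gamma expansion\<close>

definition gamma_expansion :: "nat \<Rightarrow> int poly \<Rightarrow> int poly" where
  "gamma_expansion d g = (\<Sum>i\<le>d div 2. smult (coeff g i) (monom 1 i * [:1, 1:] ^ (d - 2 * i)))"

lemma poly_gamma_expansion:
  fixes x :: "'a::field"
  assumes "degree g \<le> d div 2" and "1 + x \<noteq> 0"
  shows "poly (of_int_poly (gamma_expansion d g)) x = (1 + x) ^ d * poly (of_int_poly g) (x / (1 + x)^2)"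
proof -
  have "(1 + x) ^ d * poly (of_int_poly g) (x / (1 + x)^2)
      = (1 + x) ^ d * (\<Sum>i\<le>d div 2. of_int (coeff g i) * (x / (1 + x)^2) ^ i)"
    by (subst poly_as_sum_of_monoms'[OF assms(1), symmetric])
      (simp add: of_int_poly_sum map_poly_monom poly_sum poly_monom)
  also have "\<dots> = (\<Sum>i\<le>d div 2. of_int (coeff g i) * x ^ i * (1 + x) ^ (d - 2 * i))"
    unfolding sum_distrib_left
  proof (rule sum.cong)
    fix i assume "i \<in> {..d div 2}"
    then have "(1 + x) ^ d = (1 + x) ^ (d - 2 * i) * ((1 + x)^2) ^ i"
      by (simp flip: power_add power_mult)
    then show "(1 + x) ^ d * (of_int (coeff g i) * (x / (1 + x)^2) ^ i)
        = of_int (coeff g i) * x ^ i * (1 + x) ^ (d - 2 * i)"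
      using assms(2) by (simp add: power_divide field_simps)
  qed simp
  finally show ?thesis
    by (simp add: gamma_expansion_def of_int_poly_simps poly_sum poly_monom mult.assoc)
qed

lemma inj_on_div_square_succ: "inj_on (\<lambda>x::'a::linordered_field. x / (1 + x)^2) {0<..<1}"
proof (rule inj_onI)
  fix x y :: 'a
  assume x: "x \<in> {0<..<1}" and y: "y \<in> {0<..<1}" and "x / (1 + x)^2 = y / (1 + y)^2"
  then have "x * (1 + y)^2 = y * (1 + x)^2"
    by (simp add: frac_eq_eq add_pos_pos)
  then have "(x - y) * (1 - x * y) = 0"
    by (simp add: algebra_simps power2_eq_square)
  moreover have "x * y < 1"
    using x y mult_strict_mono[of x 1 y 1] by auto
  ultimately show "x = y" by simp
qed

lemma gamma_expansion_inject:
  assumes "degree g \<le> d div 2" and "degree h \<le> d div 2"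
    and "gamma_expansion d g = gamma_expansion d h"
  shows "g = h"
proof (rule int_poly_eqI)
  show "infinite ((\<lambda>x::rat. x / (1 + x)^2) ` {0<..<1})"
    using inj_on_div_square_succ finite_imageD by (metis infinite_Ioo zero_less_one)
next
  fix y assume "y \<in> (\<lambda>x::rat. x / (1 + x)^2) ` {0<..<1}"
  then obtain x where x: "x \<in> {0<..<1}" and y: "y = x / (1 + x)^2" by auto
  then have "1 + x \<noteq> 0" by auto
  then have "(1 + x) ^ d * poly (of_int_poly g) y = (1 + x) ^ d * poly (of_int_poly h) y"
    using poly_gamma_expansion[OF assms(1)] poly_gamma_expansion[OF assms(2)] assms(3) y by metis
  then show "poly (of_int_poly g) y = poly (of_int_poly h) y"
    using x by simp
qed

lemma gamma_eqI:
  assumes "degree g \<le> d div 2" and "f = gamma_expansion d g"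
  shows "gamma d f = g"
  unfolding gamma_def gamma_expansion_def[symmetric]
  using assms gamma_expansion_inject by blast

section \<open>The gamma polynomials of P\<close>

function gamma_P :: "nat \<Rightarrow> int poly" where
  "gamma_P n = (if n < 3 then 0 else if n = 3 then 1 else
      gamma_P (n - 1) +
      [:0, 1:] * (\<Sum>i\<in>{3..n-2}. of_nat ((n - 2) choose (i - 1)) * gamma_P i * gamma_P (n + 1 - i)))"
  by auto
termination
  by (relation "measure id") auto

declare gamma_P.simps [simp del] P.simps [simp del]

lemma gamma_P_eq_0: "n < 3 \<Longrightarrow> gamma_P n = 0"
  by (simp add: gamma_P.simps)

lemma gamma_P_3: "gamma_P 3 = 1"
  by (simp add: gamma_P.simps)

lemma gamma_P_rec:
  "n \<ge> 4 \<Longrightarrow> gamma_P n = gamma_P (n - 1) +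
     [:0, 1:] * (\<Sum>i\<in>{3..n-2}. of_nat ((n - 2) choose (i - 1)) * gamma_P i * gamma_P (n + 1 - i))"
  by (rule trans[OF gamma_P.simps]) simp

lemma P_3: "P 3 = 1"
  by (simp add: P.simps)

lemma P_rec:
  "n \<ge> 4 \<Longrightarrow> P n = P (n - 1) * [:1, 1:] +
     [:0, 1:] * (\<Sum>i\<in>{3..n-2}. of_nat ((n - 2) choose (i - 1)) * P i * P (n + 1 - i))"
  by (rule trans[OF P.simps]) simp

lemma degree_gamma_P: "2 * degree (gamma_P n) \<le> n - 3"
proof (induction n rule: less_induct)
  case (less n)
  consider "n \<le> 3" | "n = 4" | "n \<ge> 5" by linarith
  then show ?case
  proof cases
    case 1
    then show ?thesis by (cases "n = 3") (simp_all add: gamma_P_eq_0 gamma_P_3)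
  next
    case 2
    then show ?thesis using gamma_P_rec[of 4] by (simp add: gamma_P_3)
  next
    case 3
    define S where "S = (\<Sum>i\<in>{3..n-2}. of_nat ((n - 2) choose (i - 1)) * gamma_P i * gamma_P (n + 1 - i))"
    have "degree S \<le> (n - 5) div 2"
      unfolding S_def
    proof (rule degree_sum_le)
      fix i assume i: "i \<in> {3..n-2}"
      let ?c = "of_nat ((n - 2) choose (i - 1)) :: int poly"
      have "degree (?c * gamma_P i * gamma_P (n + 1 - i))
          \<le> degree (?c * gamma_P i) + degree (gamma_P (n + 1 - i))"
        by (rule degree_mult_le)
      also have "\<dots> \<le> degree (gamma_P i) + degree (gamma_P (n + 1 - i))"
        using degree_mult_le[of ?c "gamma_P i"] by (simp add: degree_of_nat)
      finally have "degree (?c * gamma_P i * gamma_P (n + 1 - i))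
          \<le> degree (gamma_P i) + degree (gamma_P (n + 1 - i))" .
      moreover have "2 * degree (gamma_P i) \<le> i - 3" "2 * degree (gamma_P (n + 1 - i)) \<le> n - 2 - i"
        using less[of i] less[of "n + 1 - i"] i 3 by auto
      ultimately show "degree (of_nat ((n - 2) choose (i - 1)) * gamma_P i * gamma_P (n + 1 - i))
          \<le> (n - 5) div 2"
        using i by (simp add: less_eq_div_iff_mult_less_eq) linarith
    qed simp
    then have "2 * degree ([:0, 1:] * S) \<le> n - 3"
      using degree_mult_le[of "[:0, 1:]" S] 3 by simp
    moreover have "2 * degree (gamma_P (n - 1)) \<le> n - 3"
      using less[of "n - 1"] 3 by simp
    moreover have "gamma_P n = gamma_P (n - 1) + [:0, 1:] * S"
      unfolding S_def by (rule gamma_P_rec) (use 3 in simp)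
    ultimately show ?thesis
      using degree_add_le_max[of "gamma_P (n - 1)" "[:0, 1:] * S"] by (simp del: mult_pCons_left)
  qed
qed


lemma poly_P_gamma_P:
  fixes x :: "'a::field"
  assumes x: "1 + x \<noteq> 0"
  shows "n \<ge> 3 \<Longrightarrow>
    poly (of_int_poly (P n)) x = (1 + x) ^ (n - 3) * poly (of_int_poly (gamma_P n)) (x / (1 + x)^2)"
proof (induction n rule: less_induct)
  case (less n)
  define s u where "s = 1 + x" and "u = x / (1 + x)^2"
  define p g where "p k = poly (of_int_poly (P k)) x" and "g k = poly (of_int_poly (gamma_P k)) u" for k
  define c where "c i = (of_nat ((n - 2) choose (i - 1)) :: 'a)" for i
  have IH: "p k = s ^ (k - 3) * g k" if "3 \<le> k" "k < n" for k
    using less.IH that by (simp add: p_def g_def s_def u_def)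
  show ?case
  proof (cases "n = 3")
    case True
    then show ?thesis by (simp add: P_3 gamma_P_3)
  next
    case False
    with less.prems have n: "n \<ge> 4" by simp
    have x_eq: "x = s^2 * u"
      using x by (simp add: s_def u_def)
    have summand: "x * (c i * (p i * p (n + 1 - i))) = s ^ (n - 3) * (u * (c i * g i * g (n + 1 - i)))"
      if i: "i \<in> {3..n-2}" for i
    proof -
      have "n - 3 = (i - 3) + (n + 1 - i - 3) + 2"
        using i n by auto
      then have pow: "s ^ (i - 3) * s ^ (n + 1 - i - 3) * s^2 = s ^ (n - 3)"
        by (simp only: power_add)
      have "p i = s ^ (i - 3) * g i" "p (n + 1 - i) = s ^ (n + 1 - i - 3) * g (n + 1 - i)"
        using IH i n by auto
      then have "x * (c i * (p i * p (n + 1 - i)))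
          = (s ^ (i - 3) * s ^ (n + 1 - i - 3) * s^2) * (u * (c i * g i * g (n + 1 - i)))"
        by (simp add: x_eq ac_simps)
      then show ?thesis
        by (simp only: pow)
    qed
    have "p n = p (n - 1) * s + (\<Sum>i\<in>{3..n-2}. x * (c i * (p i * p (n + 1 - i))))"
      by (simp add: p_def c_def s_def P_rec[OF n] of_int_poly_simps poly_sum sum_distrib_left algebra_simps)
    also have "\<dots> = s ^ (n - 3) * (g (n - 1) + u * (\<Sum>i\<in>{3..n-2}. c i * g i * g (n + 1 - i)))"
    proof -
      have "n - 3 = Suc (n - 4)"
        using n by simp
      then have "p (n - 1) * s = s ^ (n - 3) * g (n - 1)"
        using IH[of "n - 1"] n by (simp add: power_Suc2)
      moreover have "(\<Sum>i\<in>{3..n-2}. x * (c i * (p i * p (n + 1 - i))))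
          = (\<Sum>i\<in>{3..n-2}. s ^ (n - 3) * (u * (c i * g i * g (n + 1 - i))))"
        using summand by (intro sum.cong) simp_all
      ultimately show ?thesis
        by (simp add: sum_distrib_left distrib_left)
    qed
    also have "\<dots> = s ^ (n - 3) * g n"
      by (simp add: g_def gamma_P_rec[OF n] c_def of_int_poly_simps poly_sum mult.assoc)
    finally show ?thesis
      by (simp add: p_def g_def s_def u_def)
  qed
qed


lemma degree_gamma_P_le: "degree (gamma_P n) \<le> (n - 3) div 2"
  using degree_gamma_P[of n] by (simp add: less_eq_div_iff_mult_less_eq)

lemma P_eq_gamma_expansion:
  assumes "n \<ge> 3"
  shows "P n = gamma_expansion (n - 3) (gamma_P n)"
proof (rule int_poly_eqI)
  show "infinite (UNIV - {-1 :: rat})"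
    by (simp add: infinite_UNIV_char_0)
next
  fix x :: rat
  assume "x \<in> UNIV - {-1}"
  then have "1 + x \<noteq> 0" by auto
  then show "poly (of_int_poly (P n)) x = poly (of_int_poly (gamma_expansion (n - 3) (gamma_P n))) x"
    using poly_P_gamma_P assms poly_gamma_expansion[OF degree_gamma_P_le] by metis
qed

lemma Gpoly_eq_gamma_P: "n \<ge> 3 \<Longrightarrow> Gpoly n = gamma_P n"
  unfolding Gpoly_def by (intro gamma_eqI degree_gamma_P_le P_eq_gamma_expansion)

section \<open>The differential equation\<close>

lemma fps_ode_iff_nth:
  fixes F :: "'a::comm_ring_1 fps"
  shows "fps_deriv F * (1 - fps_const c * F) = fps_X + F \<longleftrightarrow>
    (\<forall>m. fps_deriv F $ m = fps_X $ m + F $ m + c * (fps_deriv F * F) $ m)"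
proof -
  have "fps_deriv F * (1 - fps_const c * F) = fps_deriv F - fps_const c * (fps_deriv F * F)"
    by (simp add: algebra_simps)
  then show ?thesis
    unfolding fps_eq_iff by (simp only: fps_sub_nth fps_add_nth fps_mult_left_const_nth diff_eq_eq)
qed

lemma fps_ode_unique:
  fixes A B :: "'a::{idom, ring_char_0} fps"
  assumes A: "fps_deriv A * (1 - fps_const c * A) = fps_X + A" "A $ 0 = 0"
    and B: "fps_deriv B * (1 - fps_const c * B) = fps_X + B" "B $ 0 = 0"
  shows "A = B"
proof -
  txt \<open>With F(0) = 0 the coefficient of z^n in F' F only involves F up to degree n.\<close>
  have conv: "(fps_deriv F * F) $ n = (\<Sum>k<n. fps_deriv F $ k * F $ (n - k))"
    if "F $ 0 = 0" for F :: "'a fps" and n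
    using that by (simp add: fps_mult_nth atLeast0AtMost lessThan_Suc_atMost[symmetric] del: fps_deriv_nth)
  have "\<forall>j\<le>n. A $ j = B $ j" for n
  proof (induction n)
    case 0
    then show ?case using A B by simp
  next
    case (Suc n)
    have "(fps_deriv A * A) $ n = (fps_deriv B * B) $ n"
      using Suc.IH by (simp add: conv A(2) B(2))
    then have "fps_deriv A $ n = fps_deriv B $ n"
      using A(1) B(1) Suc.IH by (simp only: fps_ode_iff_nth)
    then have "A $ Suc n = B $ Suc n"
      by (simp del: of_nat_Suc)
    then show ?case
      using Suc.IH le_Suc_eq by auto
  qed
  then show ?thesis
    by (auto simp: fps_eq_iff)
qed


section \<open>The exponential generating function of the gamma polynomials\<close>

lemma smult_sum_right: "smult c (sum f A) = (\<Sum>a\<in>A. smult c (f a))"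
  by (induction A rule: infinite_finite_induct) (auto simp: smult_add_right)

abbreviation gamma_P_rat :: "nat \<Rightarrow> rat poly" where
  "gamma_P_rat n \<equiv> of_int_poly (gamma_P n)"

lemma gamma_P_rat_rec:
  assumes "m \<ge> 2"
  shows "gamma_P_rat (m + 2) = gamma_P_rat (m + 1) +
    [:0, 1:] * (\<Sum>i\<in>{3..m}. smult (of_nat (m choose (i - 1))) (gamma_P_rat i * gamma_P_rat (m + 3 - i)))"
proof -
  have e: "m + 2 - 1 = m + 1" "m + 2 - 2 = m" "\<And>i. m + 2 + 1 - i = m + 3 - i"
    by auto
  have "4 \<le> m + 2"
    using assms by simp
  from gamma_P_rec[OF this] have "gamma_P (m + 2) = gamma_P (m + 1) +
      [:0, 1:] * (\<Sum>i\<in>{3..m}. of_nat (m choose (i - 1)) * gamma_P i * gamma_P (m + 3 - i))"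
    by (simp only: e)
  then show ?thesis
    by (simp add: of_int_poly_simps of_nat_poly mult.assoc)
qed

lemma binomial_convolution_gamma_P_rat:
  assumes "m \<ge> 2"
  shows "(\<Sum>k\<le>m. smult (of_nat (m choose k)) (gamma_P_rat (k + 2) * gamma_P_rat (m - k + 1)))
    = (\<Sum>i\<in>{3..m}. smult (of_nat (m choose (i - 1))) (gamma_P_rat i * gamma_P_rat (m + 3 - i)))"
proof -
  have "(\<Sum>k\<le>m. smult (of_nat (m choose k)) (gamma_P_rat (k + 2) * gamma_P_rat (m - k + 1)))
      = (\<Sum>k\<in>{1..m-2}. smult (of_nat (m choose k)) (gamma_P_rat (k + 2) * gamma_P_rat (m - k + 1)))"
    by (rule sum.mono_neutral_right) (auto simp: gamma_P_eq_0)
  also have "\<dots> = (\<Sum>i\<in>{3..m}. smult (of_nat (m choose (i - 1))) (gamma_P_rat i * gamma_P_rat (m + 3 - i)))"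
  proof (rule sum.reindex_bij_witness[of _ "\<lambda>i. m + 1 - i" "\<lambda>k. m + 1 - k"])
    fix k assume k: "k \<in> {1..m-2}"
    then have "m choose (m + 1 - k - 1) = m choose k"
      using binomial_symmetric[of k m] by fastforce
    moreover have "m + 3 - (m + 1 - k) = k + 2" "m - k + 1 = m + 1 - k"
      using k by auto
    ultimately show "smult (of_nat (m choose (m + 1 - k - 1)))
        (gamma_P_rat (m + 1 - k) * gamma_P_rat (m + 3 - (m + 1 - k)))
      = smult (of_nat (m choose k)) (gamma_P_rat (k + 2) * gamma_P_rat (m - k + 1))"
      by (simp add: mult.commute)
  qed auto
  finally show ?thesis .
qed

text \<open>The coefficient of z^m/m! in G' = z + G + t G' G.\<close>

lemma gamma_P_rat_convolution_rec:
  "gamma_P_rat (m + 2) = (if m = 1 then 1 else 0) + gamma_P_rat (m + 1) +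
    [:0, 1:] * (\<Sum>k\<le>m. smult (of_nat (m choose k)) (gamma_P_rat (k + 2) * gamma_P_rat (m - k + 1)))"
proof (cases "m \<ge> 2")
  case True
  then show ?thesis
    using gamma_P_rat_rec[OF True] binomial_convolution_gamma_P_rat[OF True] by simp
next
  case False
  then have "m = 0 \<or> m = 1" by auto
  then show ?thesis
    by (auto simp: gamma_P_eq_0 gamma_P_3[unfolded numeral_3_eq_3])
qed

lemma fps_nth_Gfps: "Gfps $ m = smult (1 / fact m) (gamma_P_rat (m + 1))"
  by (simp add: Gfps_def Gpoly_eq_gamma_P gamma_P_eq_0)

lemma fps_nth_deriv_Gfps: "fps_deriv Gfps $ m = smult (1 / fact m) (gamma_P_rat (m + 2))"
proof -
  have "(of_nat (m + 1) :: rat poly) * smult (1 / fact (m + 1)) p = smult (1 / fact m) p" for p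
    by (simp add: of_nat_poly field_simps del: of_nat_Suc)
  then show ?thesis
    by (simp add: fps_nth_Gfps del: of_nat_Suc)
qed

lemma fps_nth_deriv_Gfps_mult_Gfps:
  "(fps_deriv Gfps * Gfps) $ m = smult (1 / fact m)
    (\<Sum>k\<le>m. smult (of_nat (m choose k)) (gamma_P_rat (k + 2) * gamma_P_rat (m - k + 1)))"
proof -
  have "(fps_deriv Gfps * Gfps) $ m = (\<Sum>k\<le>m.
      smult (1 / fact k) (gamma_P_rat (k + 2)) * smult (1 / fact (m - k)) (gamma_P_rat (m - k + 1)))"
    by (simp only: fps_mult_nth atLeast0AtMost fps_nth_Gfps fps_nth_deriv_Gfps)
  also have "\<dots> = (\<Sum>k\<le>m. smult (1 / fact m)
      (smult (of_nat (m choose k)) (gamma_P_rat (k + 2) * gamma_P_rat (m - k + 1))))"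
  proof (rule sum.cong)
    fix k assume "k \<in> {..m}"
    then have "(1 / fact (m - k)) * (1 / fact k) = (1 / fact m) * (of_nat (m choose k) :: rat)"
      by (simp add: binomial_fact)
    then show "smult (1 / fact k) (gamma_P_rat (k + 2)) * smult (1 / fact (m - k)) (gamma_P_rat (m - k + 1))
        = smult (1 / fact m) (smult (of_nat (m choose k)) (gamma_P_rat (k + 2) * gamma_P_rat (m - k + 1)))"
      by (simp only: mult_smult_left mult_smult_right smult_smult)
  qed simp
  finally show ?thesis
    by (simp only: smult_sum_right)
qed

lemma Gfps_ode: "fps_deriv Gfps * (1 - fps_const [:0, 1:] * Gfps) = fps_X + Gfps"
proof (unfold fps_ode_iff_nth, intro allI)
  fix m
  have "fps_X $ m = smult (1 / fact m) (if m = 1 then 1 else 0 :: rat poly)"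
    by simp
  then show "fps_deriv Gfps $ m = fps_X $ m + Gfps $ m + [:0, 1:] * (fps_deriv Gfps * Gfps) $ m"
    by (subst fps_nth_deriv_Gfps, subst gamma_P_rat_convolution_rec)
      (simp only: fps_nth_Gfps fps_nth_deriv_Gfps_mult_Gfps smult_add_right mult_smult_right)
qed

theorem mainTheorem6:
  shows "fps_deriv Gfps * (1 - fps_const [:0, 1:] * Gfps) = fps_X + Gfps \<and> Gfps $ 0 = 0 \<and>
    (\<forall>H :: rat poly fps. fps_deriv H * (1 - fps_const [:0, 1:] * H) = fps_X + H \<and> H $ 0 = 0
        \<longrightarrow> H = Gfps)"
proof (intro conjI allI impI)
  show ode: "fps_deriv Gfps * (1 - fps_const [:0, 1:] * Gfps) = fps_X + Gfps"
    by (rule Gfps_ode)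
  show init: "Gfps $ 0 = 0"
    by (simp add: fps_nth_Gfps gamma_P_eq_0)
  fix H :: "rat poly fps"
  assume "fps_deriv H * (1 - fps_const [:0, 1:] * H) = fps_X + H \<and> H $ 0 = 0"
  then show "H = Gfps"
    using fps_ode_unique[OF _ _ ode init] by blast
qed

end
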